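(* Let $q\in(0,\tfrac12)$ and $T,S\in\mathbb{R}$, and set $$P_{T,S}(x)=(T+S-1)x^3+\big(1-T-2S+q(S-1-T)\big)x^2+\big(S+q(T-S)\big)x,$$ $X=(1-q)(T-1)+qS$ and $Y=q(T-1)+(1-q)S$. Then $P_{T,S}$ has exactly three distinct roots in $[0,1]$ if and only if $$X<0\quad\text{and}\quad -\frac{X^2}{4q}-q<Y<-q.$$ *)

theory Defs
  imports Complex_Main
begin

definition P_TS :: "real \<Rightarrow> real \<Rightarrow> real \<Rightarrow> real \<Rightarrow> real" where
  "P_TS q T S x = (T + S - 1) * x ^ 3 + (1 - T - 2 * S + q * (S - 1 - T)) * x ^ 2
                  + (S + q * (T - S)) * x"

end

theory Submission
  imports Defs
begin

text \<open>Dividing out the root 0, \<open>P_TS q T S x = x * Q x\<close> for a quadratic \<open>Q\<close> with \<open>Q 1 = -q < 0\<close>.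
  So \<open>P_TS\<close> has three roots in \<open>[0, 1]\<close> exactly when \<open>Q\<close> has two distinct roots in \<open>(0, 1)\<close>,
  which for a quadratic negative at 1 is decided by the signs of \<open>Q 0\<close>, of \<open>Q'\<close> at both
  ends of the interval, and of the discriminant; in terms of \<open>X\<close> and \<open>Y\<close> the discriminant is
  \<open>X\<^sup>2 + 4 q (Y + q)\<close>.\<close>

lemma quadratic_eq_factored:
  fixes a b c r s x :: real
  assumes "a * r\<^sup>2 + b * r + c = 0" "a * s\<^sup>2 + b * s + c = 0" "r \<noteq> s"
  shows "a * x\<^sup>2 + b * x + c = a * (x - r) * (x - s)"
proof -
  have "(r - s) * (a * (r + s) + b) = 0"
    using assms(1,2) by (simp add: algebra_simps power2_eq_square)
  then have b: "b = - a * (r + s)" using assms(3) by simp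
  have "c = - a * r\<^sup>2 - b * r" using assms(1) by simp
  then have c: "c = a * r * s" unfolding b by (simp add: algebra_simps power2_eq_square)
  show ?thesis unfolding b c by (simp add: algebra_simps power2_eq_square)
qed

lemma quadratic_two_roots_in_unit_interval_iff:
  fixes a b c :: real
  assumes neg_at_1: "a + b + c < 0"
  shows "(\<exists>r s. 0 < r \<and> r < s \<and> s < 1 \<and> a * r\<^sup>2 + b * r + c = 0 \<and> a * s\<^sup>2 + b * s + c = 0)
    \<longleftrightarrow> c < 0 \<and> 0 < b \<and> 2 * a + b < 0 \<and> 4 * a * c < b\<^sup>2"
proof
  assume "\<exists>r s. 0 < r \<and> r < s \<and> s < 1 \<and> a * r\<^sup>2 + b * r + c = 0 \<and> a * s\<^sup>2 + b * s + c = 0"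
  then obtain r s where rs: "0 < r" "r < s" "s < 1"
    and Q: "\<And>x. a * x\<^sup>2 + b * x + c = a * (x - r) * (x - s)"
    using quadratic_eq_factored by (metis less_irrefl)
  have b: "b = - a * (r + s)" and c: "c = a * r * s"
    using Q[of 0] Q[of 1] by (simp_all add: algebra_simps)
  have "a * ((1 - r) * (1 - s)) < 0" using Q[of 1] neg_at_1 by (simp add: mult.assoc)
  moreover have "0 < (1 - r) * (1 - s)" using rs by simp
  ultimately have a: "a < 0" using rs by (auto simp: mult_less_0_iff)
  have "2 * a + b = a * ((1 - r) + (1 - s))" unfolding b by (simp add: algebra_simps)
  then have slope_1: "2 * a + b < 0" using a rs by (simp add: mult_neg_pos)
  have "b\<^sup>2 - 4 * a * c = a\<^sup>2 * (r - s)\<^sup>2"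
    unfolding b c by (simp add: algebra_simps power2_eq_square)
  moreover have "0 < a\<^sup>2 * (r - s)\<^sup>2" using a rs by simp
  ultimately have "4 * a * c < b\<^sup>2" by linarith
  with slope_1 show "c < 0 \<and> 0 < b \<and> 2 * a + b < 0 \<and> 4 * a * c < b\<^sup>2"
    using a rs unfolding b c by (simp add: mult_neg_pos mult_pos_neg)
next
  assume "c < 0 \<and> 0 < b \<and> 2 * a + b < 0 \<and> 4 * a * c < b\<^sup>2"
  then have c: "c < 0" and b: "0 < b" and slope_1: "2 * a + b < 0" and disc: "4 * a * c < b\<^sup>2"
    by auto
  define Q where "Q x = a * x\<^sup>2 + b * x + c" for x :: real
  define x0 where "x0 = - b / (2 * a)"
  have a: "a < 0" using b slope_1 by simp
  have x0: "0 < x0" "x0 < 1" using a b slope_1 unfolding x0_def by (simp_all add: field_simps)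
  have "(4 * a) * Q x0 = 4 * a * c - b\<^sup>2"
    unfolding Q_def x0_def using a by (simp add: field_simps power2_eq_square)
  then have "(4 * a) * Q x0 < 0" using disc by simp
  then have Q_x0: "0 < Q x0" using a by (simp add: mult_less_0_iff)
  have Q_ends: "Q 0 < 0" "Q 1 < 0" using c neg_at_1 unfolding Q_def by simp_all
  have cont: "isCont Q x" for x unfolding Q_def by (intro continuous_intros)
  obtain r where r: "0 \<le> r" "r \<le> x0" "Q r = 0"
    using IVT[of Q 0 0 x0] Q_ends Q_x0 x0 cont by force
  obtain s where s: "x0 \<le> s" "s \<le> 1" "Q s = 0"
    using IVT2[of Q 1 0 x0] Q_ends Q_x0 x0 cont by force
  have "r \<noteq> 0" "r \<noteq> x0" "s \<noteq> x0" "s \<noteq> 1" using r s Q_ends Q_x0 by auto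
  with r s show "\<exists>r s. 0 < r \<and> r < s \<and> s < 1 \<and> a * r\<^sup>2 + b * r + c = 0 \<and> a * s\<^sup>2 + b * s + c = 0"
    unfolding Q_def by (intro exI[of _ r] exI[of _ s]) auto
qed

lemma card_roots_x_times_quadratic_eq_3_iff:
  fixes a b c :: real
  assumes nonzero_at_1: "a + b + c \<noteq> 0"
  defines "Z \<equiv> {x \<in> {0..1}. x * (a * x\<^sup>2 + b * x + c) = 0}"
  shows "(finite Z \<and> card Z = 3)
    \<longleftrightarrow> (\<exists>r s. 0 < r \<and> r < s \<and> s < 1 \<and> a * r\<^sup>2 + b * r + c = 0 \<and> a * s\<^sup>2 + b * s + c = 0)"
proof
  have inner_root: "0 < x \<and> x < 1 \<and> a * x\<^sup>2 + b * x + c = 0" if "x \<in> Z" "x \<noteq> 0" for x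
    using that nonzero_at_1 unfolding Z_def by (cases "x = 1") auto
  assume "finite Z \<and> card Z = 3"
  then obtain x y z where "Z = {x, y, z}" "x \<noteq> y" "y \<noteq> z" "x \<noteq> z"
    by (auto simp: card_3_iff)
  then obtain r s where "r \<in> Z" "s \<in> Z" "r \<noteq> 0" "s \<noteq> 0" "r < s"
    by (metis insertI1 insert_commute linorder_neqE_linordered_idom)
  with inner_root show "\<exists>r s. 0 < r \<and> r < s \<and> s < 1 \<and> a * r\<^sup>2 + b * r + c = 0 \<and> a * s\<^sup>2 + b * s + c = 0"
    by blast
next
  assume "\<exists>r s. 0 < r \<and> r < s \<and> s < 1 \<and> a * r\<^sup>2 + b * r + c = 0 \<and> a * s\<^sup>2 + b * s + c = 0"
  then obtain r s where rs: "0 < r" "r < s" "s < 1"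
    and Q: "\<And>x. a * x\<^sup>2 + b * x + c = a * (x - r) * (x - s)"
    using quadratic_eq_factored by (metis less_irrefl)
  have "a \<noteq> 0" using Q[of 1] nonzero_at_1 by auto
  then have "Z = {0, r, s}" using rs unfolding Z_def Q by auto
  then show "finite Z \<and> card Z = 3" using rs by simp
qed

lemma P_TS_eq_x_times_quadratic:
  fixes q T S x :: real
  defines "X \<equiv> (1 - q) * (T - 1) + q * S" and "Y \<equiv> q * (T - 1) + (1 - q) * S"
  shows "P_TS q T S x = x * ((X + Y) * x\<^sup>2 + (- (X + 2 * Y + 2 * q)) * x + (Y + q))"
  unfolding P_TS_def X_def Y_def by (simp add: power2_eq_square power3_eq_cube algebra_simps)

theorem mainTheorem6:
  fixes q T S :: real
  assumes "0 < q" and "q < 1 / 2"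
  defines "X \<equiv> (1 - q) * (T - 1) + q * S"
      and "Y \<equiv> q * (T - 1) + (1 - q) * S"
  shows "(finite {x \<in> {0..1}. P_TS q T S x = 0} \<and> card {x \<in> {0..1}. P_TS q T S x = 0} = 3)
         \<longleftrightarrow> (X < 0 \<and> - (X ^ 2) / (4 * q) - q < Y \<and> Y < - q)"
proof -
  have sum_coeffs: "(X + Y) + (- (X + 2 * Y + 2 * q)) + (Y + q) = - q" by simp
  have disc: "4 * (X + Y) * (Y + q) < (- (X + 2 * Y + 2 * q))\<^sup>2 \<longleftrightarrow> - (X ^ 2) / (4 * q) - q < Y"
    using \<open>0 < q\<close> by (simp add: field_simps power2_eq_square) linarith
  have "X < 0" if "X - 2 * q < 0" "X + 2 * (Y + q) < 0" "- (X ^ 2) < 4 * q * (Y + q)"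
  proof (rule ccontr)
    assume "\<not> X < 0"
    have "2 * q * (X + 2 * (Y + q)) < 0" using that(2) \<open>0 < q\<close> by (simp add: mult_pos_neg)
    then have "4 * q * (Y + q) < - 2 * q * X" by (simp add: algebra_simps)
    moreover have "X\<^sup>2 \<le> 2 * q * X"
      using \<open>\<not> X < 0\<close> that(1) by (simp add: power2_eq_square mult_right_mono)
    ultimately show False using that(3) by linarith
  qed
  then have "(Y + q < 0 \<and> 0 < - (X + 2 * Y + 2 * q) \<and> 2 * (X + Y) + - (X + 2 * Y + 2 * q) < 0
      \<and> - (X ^ 2) / (4 * q) - q < Y) \<longleftrightarrow> (X < 0 \<and> - (X ^ 2) / (4 * q) - q < Y \<and> Y < - q)"
    using \<open>0 < q\<close> by (auto simp: field_simps)
  then show ?thesis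
    using card_roots_x_times_quadratic_eq_3_iff[of "X + Y" "- (X + 2 * Y + 2 * q)" "Y + q"]
      quadratic_two_roots_in_unit_interval_iff[of "X + Y" "- (X + 2 * Y + 2 * q)" "Y + q"]
      sum_coeffs disc \<open>0 < q\<close>
    unfolding P_TS_eq_x_times_quadratic X_def Y_def by simp
qed

end
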